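(* Let $\pi$ be a propositional formula and $\varphi$ an arbitrary formula. Then (1) the formula $\lnot\Box\pi\to(\varphi\leftrightarrow[\dagger'\pi]\varphi)$ is valid (true at every world of every model); but (2) the formula $\lnot\Box\pi\to(\varphi\leftrightarrow[\dagger\pi]\varphi)$ is not necessarily valid, i.e. there exist a propositional $\pi$ and a formula $\varphi$ for which it is not valid.
   Context: Fix a countable non-empty set $\mathit{At}$ of atoms. Formulas are built from $\top$, atoms, $\lnot$, $\land$, $\Box$ and, for each propositional $\pi$, operators $[\dagger\pi]$ and $[\dagger'\pi]$. A model is $\mathcal{M}=\langle W,R,V\rangle$, $W\neq\varnothing$, $R\subseteq W\times W$ arbitrary, $V:\mathit{At}\to\mathcal{P}(W)$, with standard Kripke semantics for $\Box$. A literal is an atom or its negation; a clause is a finite set $D$ of literals read as $\bigvee D$ ($\bigvee\varnothing:=\bot$), tautological if it contains $p$ and $\lnot p$ for some $p$. For propositional $\pi$, $\mathcal{C}(\pi)$ is the set of non-tautological clauses $D$ with $\models\pi\to\bigvee D$ and no $D'\subsetneq D$ with $\models\pi\to\bigvee D'$. For a model $\mathcal{M}$ and a non-tautological clause $D$, $\mathcal{M}^{(D)}_u=\langle W',R',V'\rangle$ has $W'=W\times\{0,1\}$, $(w,i)R'(v,j)$ iff $wRv$, $(w,0)\in V'(p)$ iff $w\in V(p)$, and $(w,1)\in V'(p)$ iff $\lnot p\in D$, or $\{p,\lnot p\}\cap D=\varnothing$ and $w\in V(p)$. Semantics: $\mathcal{M},w\models[\dagger\pi]\varphi$ iff for all $D\in\mathcal{C}(\pi)$,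 $\mathcal{M}^{(D)}_u,(w,0)\models\varphi$. Conditional forgetting: $\mathcal{M},w\models[\dagger'\pi]\varphi$ iff either $\mathcal{M},w\models\Box\pi$ and for all $D\in\mathcal{C}(\pi)$, $\mathcal{M}^{(D)}_u,(w,0)\models\varphi$; or $\mathcal{M},w\not\models\Box\pi$ and $\mathcal{M},w\models\varphi$. *)

theory Defs
  imports "HOL-Library.Countable"
begin

datatype 'p pf = PTop | PAtom 'p | PNot "'p pf" | PAnd "'p pf" "'p pf"

primrec peval :: "('p \<Rightarrow> bool) \<Rightarrow> 'p pf \<Rightarrow> bool" where
  "peval v PTop = True"
| "peval v (PAtom p) = v p"
| "peval v (PNot a) = (\<not> peval v a)"
| "peval v (PAnd a b) = (peval v a \<and> peval v b)"

datatype 'p fm = Top | Atom 'p | Not "'p fm" | And "'p fm" "'p fm" | Box "'p fm"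
  | Forget "'p pf" "'p fm"
  | CForget "'p pf" "'p fm"

primrec emb :: "'p pf \<Rightarrow> 'p fm" where
  "emb PTop = Top"
| "emb (PAtom p) = Atom p"
| "emb (PNot a) = Not (emb a)"
| "emb (PAnd a b) = And (emb a) (emb b)"

definition Or :: "'p fm \<Rightarrow> 'p fm \<Rightarrow> 'p fm" where
  "Or a b = Not (And (Not a) (Not b))"
definition Imp :: "'p fm \<Rightarrow> 'p fm \<Rightarrow> 'p fm" where
  "Imp a b = Not (And a (Not b))"
definition Iff :: "'p fm \<Rightarrow> 'p fm \<Rightarrow> 'p fm" where
  "Iff a b = And (Imp a b) (Imp b a)"

datatype 'p lit = Pos 'p | Neg 'p

primrec lit_true :: "('p \<Rightarrow> bool) \<Rightarrow> 'p lit \<Rightarrow> bool" where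
  "lit_true v (Pos p) = v p"
| "lit_true v (Neg p) = (\<not> v p)"

definition tautological :: "'p lit set \<Rightarrow> bool" where
  "tautological D \<longleftrightarrow> (\<exists>p. Pos p \<in> D \<and> Neg p \<in> D)"

definition entails_clause :: "'p pf \<Rightarrow> 'p lit set \<Rightarrow> bool" where
  "entails_clause \<pi> D \<longleftrightarrow> (\<forall>v. peval v \<pi> \<longrightarrow> (\<exists>l\<in>D. lit_true v l))"

definition clauses :: "'p pf \<Rightarrow> 'p lit set set" where
  "clauses \<pi> = {D. finite D \<and> \<not> tautological D \<and> entails_clause \<pi> D
                  \<and> \<not> (\<exists>D'. D' \<subset> D \<and> entails_clause \<pi> D')}"

type_synonym ('w, 'p) model = "'w set \<times> ('w \<times> 'w) set \<times> ('p \<Rightarrow> 'w set)"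

definition wf_model :: "('w, 'p) model \<Rightarrow> bool" where
  "wf_model M \<longleftrightarrow> (case M of (W, R, V) \<Rightarrow>
      W \<noteq> {} \<and> R \<subseteq> W \<times> W \<and> (\<forall>p. V p \<subseteq> W))"

(* The update M^(D)_u changes the world type (W x {0,1}).  To allow nested
   updates in one recursive semantics, worlds are represented as pairs
   (w, bs) with a bit list bs; W x {0,1} is encoded by prepending a bit
   (False = 0, True = 1). *)
definition ext :: "bool \<Rightarrow> 'w \<times> bool list \<Rightarrow> 'w \<times> bool list" where
  "ext b x = (fst x, b # snd x)"

definition upd :: "'p lit set \<Rightarrow> ('w \<times> bool list, 'p) model \<Rightarrow> ('w \<times> bool list, 'p) model" where
  "upd D M = (case M of (W, R, V) \<Rightarrow>
     ({ext b x | b x. x \<in> W},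
      {(ext b x, ext c y) | b c x y. (x, y) \<in> R},
      (\<lambda>p. {ext False x | x. x \<in> V p}
         \<union> {ext True x | x. x \<in> W \<and> (Neg p \<in> D \<or> (Pos p \<notin> D \<and> Neg p \<notin> D \<and> x \<in> V p))})))"

primrec sat :: "('w \<times> bool list, 'p) model \<Rightarrow> 'w \<times> bool list \<Rightarrow> 'p fm \<Rightarrow> bool" where
  "sat M x Top = True"
| "sat M x (Atom p) = (x \<in> snd (snd M) p)"
| "sat M x (Not a) = (\<not> sat M x a)"
| "sat M x (And a b) = (sat M x a \<and> sat M x b)"
| "sat M x (Box a) = (\<forall>y. (x, y) \<in> fst (snd M) \<longrightarrow> sat M y a)"
| "sat M x (Forget \<pi> a) = (\<forall>D\<in>clauses \<pi>. sat (upd D M) (ext False x) a)"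
| "sat M x (CForget \<pi> a) =
     (if (\<forall>y. (x, y) \<in> fst (snd M) \<longrightarrow> peval (\<lambda>p. y \<in> snd (snd M) p) \<pi>)
      then (\<forall>D\<in>clauses \<pi>. sat (upd D M) (ext False x) a)
      else sat M x a)"

definition lift :: "('w, 'p) model \<Rightarrow> ('w \<times> bool list, 'p) model" where
  "lift M = (case M of (W, R, V) \<Rightarrow>
     ({(w, []) | w. w \<in> W}, {((w, []), (v, [])) | w v. (w, v) \<in> R},
      (\<lambda>p. {(w, []) | w. w \<in> V p})))"

definition holds :: "('w, 'p) model \<Rightarrow> 'w \<Rightarrow> 'p fm \<Rightarrow> bool" where
  "holds M w \<phi> = sat (lift M) (w, []) \<phi>"

end

theory Submission
  imports Defs
begin

text \<open>Conditional forgetting leaves a world untouched when \<open>\<box>\<pi>\<close> fails there, so the first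
  formula is valid.  Unconditional forgetting of \<open>p\<close> through the clause \<open>{p}\<close> instead adds a
  copy of every world in which \<open>p\<close> is false; these copies are visible from everywhere, so \<open>\<box>p\<close>
  fails at every world with a successor.  In the two-world model \<open>0 \<rightarrow> 0, 0 \<rightarrow> 1, 1 \<rightarrow> 1\<close> with
  \<open>p\<close> true only at \<open>1\<close>, the world \<open>0\<close> satisfies \<open>\<not>\<box>p\<close> and \<open>\<diamond>\<box>p\<close>, but \<open>[\<dagger>p]\<diamond>\<box>p\<close> fails.\<close>

lemma sat_emb: "sat M x (emb \<pi>) = peval (\<lambda>p. x \<in> snd (snd M) p) \<pi>"
  by (induction \<pi>) auto

lemma sat_CForget_if_not_Box:
  assumes "\<not> sat M x (Box (emb \<pi>))"
  shows "sat M x (CForget \<pi> \<phi>) = sat M x \<phi>"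
  using assms unfolding sat.simps sat_emb by (rule if_not_P)

lemma sat_not_Box_imp_iff_CForget: "sat M x (Imp (Not (Box (emb \<pi>))) (Iff \<phi> (CForget \<pi> \<phi>)))"
  unfolding Imp_def Iff_def using sat_CForget_if_not_Box[of M x \<pi> \<phi>]
  by (simp only: sat.simps(3,4)) blast

lemma Pos_in_clauses_PAtom: "{Pos p} \<in> clauses (PAtom p)"
proof -
  have "\<not> entails_clause (PAtom p) {}"
    unfolding entails_clause_def by (auto intro: exI[of _ "\<lambda>_. True"])
  moreover have "entails_clause (PAtom p) {Pos p}"
    unfolding entails_clause_def by auto
  moreover have "D' \<subset> {Pos p} \<Longrightarrow> D' = {}" for D'
    by auto
  ultimately show ?thesis
    unfolding clauses_def tautological_def by auto
qed

lemma upd_successor_iff: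
  "(ext b x, z) \<in> fst (snd (upd D M)) \<longleftrightarrow> (\<exists>c y. z = ext c y \<and> (x, y) \<in> fst (snd M))"
proof -
  obtain W R V where M: "M = (W, R, V)"
    by (cases M)
  have ext_eq_iff: "ext b x = ext b' x' \<longleftrightarrow> b = b' \<and> x = x'" for b' x'
    by (auto simp: ext_def prod_eq_iff)
  show ?thesis
    using ext_eq_iff by (auto simp: M upd_def simp del: split_paired_Ex split_paired_All)
qed

lemma ext_True_notin_upd_Pos: "ext True y \<notin> snd (snd (upd {Pos p} M)) p"
  by (cases M) (auto simp: upd_def ext_def)

lemma upd_Pos_not_Box_Atom:
  assumes "(x, y) \<in> fst (snd M)"
  shows "\<not> sat (upd {Pos p} M) (ext b x) (Box (Atom p))"
proof -
  have "(ext b x, ext True y) \<in> fst (snd (upd {Pos p} M))"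
    using assms upd_successor_iff by blast
  then show ?thesis
    using ext_True_notin_upd_Pos[of y p M] unfolding sat.simps by metis
qed

lemma upd_Pos_not_Dia_Box_Atom:
  assumes "\<And>y. (x, y) \<in> fst (snd M) \<Longrightarrow> \<exists>z. (y, z) \<in> fst (snd M)"
  shows "\<not> sat (upd {Pos p} M) (ext b x) (Not (Box (Not (Box (Atom p)))))"
proof -
  have "\<not> sat (upd {Pos p} M) z (Box (Atom p))" if succ: "(ext b x, z) \<in> fst (snd (upd {Pos p} M))" for z
  proof -
    obtain c y where z: "z = ext c y" and "(x, y) \<in> fst (snd M)"
      using succ upd_successor_iff by blast
    then obtain w where "(y, w) \<in> fst (snd M)"
      using assms by blast
    then show ?thesis
      unfolding z by (rule upd_Pos_not_Box_Atom)
  qed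
  then show ?thesis
    by (metis sat.simps(3,5))
qed

theorem proposition6:
  shows "(\<forall>(\<pi>::'p::countable pf) \<phi> (M::('w, 'p) model) w.
            wf_model M \<and> w \<in> fst M \<longrightarrow>
            holds M w (Imp (Not (Box (emb \<pi>))) (Iff \<phi> (CForget \<pi> \<phi>))))
       \<and> (\<exists>(\<pi>::'p pf) \<phi> (M::(nat, 'p) model) w.
            wf_model M \<and> w \<in> fst M \<and>
            \<not> holds M w (Imp (Not (Box (emb \<pi>))) (Iff \<phi> (Forget \<pi> \<phi>))))"
proof
  show "\<forall>(\<pi>::'p::countable pf) \<phi> (M::('w, 'p) model) w.
            wf_model M \<and> w \<in> fst M \<longrightarrow>
            holds M w (Imp (Not (Box (emb \<pi>))) (Iff \<phi> (CForget \<pi> \<phi>)))"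
    by (simp add: holds_def sat_not_Box_imp_iff_CForget)
next
  fix p :: 'p
  define M :: "(nat, 'p) model" where "M = ({0, 1}, {(0, 0), (0, 1), (1, 1)}, \<lambda>_. {1})"
  define \<phi> :: "'p fm" where "\<phi> = Not (Box (Not (Box (Atom p))))"
  have lift_M: "lift M = ({(0, []), (1, [])}, {((0, []), (0, [])), ((0, []), (1, [])), ((1, []), (1, []))},
      \<lambda>_. {(1, [])})"
    unfolding lift_def M_def by auto
  have "\<not> sat (lift M) (0, []) (Box (emb (PAtom p)))" and "sat (lift M) (0, []) \<phi>"
    by (simp_all add: lift_M \<phi>_def)
  moreover have "\<not> sat (upd {Pos p} (lift M)) (ext False (0, [])) \<phi>"
    unfolding \<phi>_def by (rule upd_Pos_not_Dia_Box_Atom) (auto simp: lift_M)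
  ultimately have "\<not> holds M 0 (Imp (Not (Box (emb (PAtom p)))) (Iff \<phi> (Forget (PAtom p) \<phi>)))"
    unfolding holds_def Imp_def Iff_def using Pos_in_clauses_PAtom[of p] by auto
  moreover have "wf_model M" and "(0::nat) \<in> fst M"
    by (auto simp: M_def wf_model_def)
  ultimately show "\<exists>(\<pi>::'p pf) \<phi> (M::(nat, 'p) model) w.
            wf_model M \<and> w \<in> fst M \<and>
            \<not> holds M w (Imp (Not (Box (emb \<pi>))) (Iff \<phi> (Forget \<pi> \<phi>)))"
    by blast
qed

end
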